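(* An integral domain $D$ is unit-additive if and only if for all $d,e,f\in D\setminus\{0\}$ with $d=\frac1e+\frac1f$ (in the fraction field of $D$), $d$ is a unit of $D$. In particular, every E-simple domain is unit-additive.
   Context: A commutative ring is unit-additive if the sum of any two units is either a unit or nilpotent (for a domain: a unit or zero). For an integral domain $D$ with fraction field $F$, the reciprocal complement $R(D)$ is the subring of $F$ generated by all $1/d$, $d\in D\setminus\{0\}$. An element $d\in D$ is Egyptian if $d\in R(D)$. $D$ is E-simple if every Egyptian element of $D$ is a unit of $D$. *)

theory Defs
  imports "HOL-Computational_Algebra.Fraction_Field"
begin

definition emb :: "'a::idom \<Rightarrow> 'a fract" where
  "emb d = Fract d 1"

definition unit_additive :: "'a::idom itself \<Rightarrow> bool" where
  "unit_additive _ \<longleftrightarrow>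
     (\<forall>u v :: 'a. u dvd 1 \<and> v dvd 1 \<longrightarrow> (u + v) dvd 1 \<or> (\<exists>n. (u + v) ^ n = 0))"

inductive_set recip_complement :: "'a::idom fract set" where
  gen: "d \<noteq> 0 \<Longrightarrow> inverse (emb d) \<in> recip_complement"
| zero: "0 \<in> recip_complement"
| one: "1 \<in> recip_complement"
| add: "x \<in> recip_complement \<Longrightarrow> y \<in> recip_complement \<Longrightarrow> x + y \<in> recip_complement"
| neg: "x \<in> recip_complement \<Longrightarrow> - x \<in> recip_complement"
| mult: "x \<in> recip_complement \<Longrightarrow> y \<in> recip_complement \<Longrightarrow> x * y \<in> recip_complement"

definition egyptian :: "'a::idom \<Rightarrow> bool" where
  "egyptian d \<longleftrightarrow> emb d \<in> recip_complement"

definition E_simple :: "'a::idom itself \<Rightarrow> bool" where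
  "E_simple _ \<longleftrightarrow> (\<forall>d :: 'a. egyptian d \<longrightarrow> d dvd 1)"

end

theory Submission
  imports Defs
begin

(* Clearing denominators, d = 1/e + 1/f reads d e f = e + f.  Then e = f (d e - 1) and
   f = e (d f - 1), so w = d f - 1 is a unit and 1 + w = d e w.  Conversely, for units u, v
   the element u + v is the sum of the reciprocals of u^-1 and v^-1.  In a domain a
   nilpotent is zero, so unit-additivity says exactly that a nonzero sum 1 + w of units,
   here d e w, is a unit. *)

lemma emb_eq_inverse_add_inverse_iff:
  fixes d e f :: "'a::idom"
  assumes "e \<noteq> 0" "f \<noteq> 0"
  shows "emb d = inverse (emb e) + inverse (emb f) \<longleftrightarrow> d * (e * f) = e + f"
proof -
  have "inverse (emb e) + inverse (emb f) = Fract (f + e) (e * f)"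
    using assms by (simp add: emb_def)
  then show ?thesis
    using assms by (simp add: emb_def eq_fract add.commute)
qed

lemma unit_additive_iff_nonzero_sums:
  "unit_additive TYPE('a::idom) \<longleftrightarrow>
     (\<forall>u v :: 'a. u dvd 1 \<and> v dvd 1 \<and> u + v \<noteq> 0 \<longrightarrow> (u + v) dvd 1)"
  unfolding unit_additive_def by (metis power_eq_0_iff power_one_right)

lemma unit_additive_imp_reciprocal_sum_unit:
  fixes d e f :: "'a::idom"
  assumes ua: "unit_additive TYPE('a)" and "d \<noteq> 0" "e \<noteq> 0" "f \<noteq> 0"
    and eq: "d * (e * f) = e + f"
  shows "d dvd 1"
proof -
  define w where "w = d * f - 1"
  have f_eq: "f = e * w"
    using eq by (simp add: w_def algebra_simps)
  have e_eq: "e = f * (d * e - 1)"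
    using eq by (simp add: algebra_simps)
  have "e * (w * (d * e - 1)) = e * 1"
    using f_eq e_eq by (simp add: algebra_simps)
  then have "w * (d * e - 1) = 1"
    using \<open>e \<noteq> 0\<close> by simp
  then have w_unit: "w dvd 1"
    by (metis dvd_triv_left)
  have "e * (1 + w) = e * (d * e * w)"
    using eq f_eq by (simp add: algebra_simps)
  then have sum_eq: "1 + w = d * e * w"
    using \<open>e \<noteq> 0\<close> by simp
  have "1 + w \<noteq> 0"
    using sum_eq w_unit \<open>d \<noteq> 0\<close> \<open>e \<noteq> 0\<close> by auto
  then have "(1 + w) dvd 1"
    using ua w_unit unfolding unit_additive_iff_nonzero_sums by (meson one_dvd)
  then show ?thesis
    using sum_eq by (metis dvd_mult_left)
qed

lemma sum_of_units_is_reciprocal_sum: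
  fixes u v :: "'a::idom"
  assumes "u dvd 1" "v dvd 1"
  obtains e f where "e \<noteq> 0" "f \<noteq> 0" "(u + v) * (e * f) = e + f"
proof -
  obtain e f where "u * e = 1" "v * f = 1"
    using assms by (metis dvd_def)
  then have "e \<noteq> 0" "f \<noteq> 0" "(u + v) * (e * f) = e + f"
    by (auto simp: algebra_simps)
  then show ?thesis ..
qed

lemma unit_additive_iff_reciprocal_sums_are_units:
  "unit_additive TYPE('a::idom) \<longleftrightarrow>
     (\<forall>d e f :: 'a. d \<noteq> 0 \<and> e \<noteq> 0 \<and> f \<noteq> 0 \<and> d * (e * f) = e + f \<longrightarrow> d dvd 1)"
  (is "?ua \<longleftrightarrow> ?rec")
proof
  assume ?ua
  then show ?rec
    using unit_additive_imp_reciprocal_sum_unit by blast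
next
  assume ?rec
  show ?ua
    unfolding unit_additive_iff_nonzero_sums
  proof (intro allI impI)
    fix u v :: 'a
    assume "u dvd 1 \<and> v dvd 1 \<and> u + v \<noteq> 0"
    moreover obtain e f where "e \<noteq> 0" "f \<noteq> 0" "(u + v) * (e * f) = e + f"
      using calculation sum_of_units_is_reciprocal_sum by blast
    ultimately show "(u + v) dvd 1"
      using \<open>?rec\<close> by blast
  qed
qed

lemma egyptian_if_emb_eq_inverse_add_inverse:
  fixes d e f :: "'a::idom"
  assumes "e \<noteq> 0" "f \<noteq> 0" "emb d = inverse (emb e) + inverse (emb f)"
  shows "egyptian d"
  unfolding egyptian_def assms(3)
  using assms(1,2) by (intro recip_complement.add recip_complement.gen)

theorem mainTheorem2:
  shows "(unit_additive TYPE('a::idom) \<longleftrightarrow>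
           (\<forall>d e f :: 'a. d \<noteq> 0 \<and> e \<noteq> 0 \<and> f \<noteq> 0 \<and>
              emb d = inverse (emb e) + inverse (emb f) \<longrightarrow> d dvd 1))
         \<and> (E_simple TYPE('a::idom) \<longrightarrow> unit_additive TYPE('a))"
proof -
  have reciprocal_sums: "unit_additive TYPE('a) \<longleftrightarrow>
      (\<forall>d e f :: 'a. d \<noteq> 0 \<and> e \<noteq> 0 \<and> f \<noteq> 0 \<and>
         emb d = inverse (emb e) + inverse (emb f) \<longrightarrow> d dvd 1)"
    by (simp add: unit_additive_iff_reciprocal_sums_are_units emb_eq_inverse_add_inverse_iff
        cong: conj_cong)
  moreover have "E_simple TYPE('a) \<longrightarrow> unit_additive TYPE('a)"
    unfolding reciprocal_sums E_simple_def
    using egyptian_if_emb_eq_inverse_add_inverse by blast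
  ultimately show ?thesis ..
qed

end
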